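(* Let $n\ge 2$ and let $\Delta$ be a finite subset of $\mathbb{A}^n_{\mathbb{C}}$. Then $\mathrm{Stab}(\Delta)=\{f\in\mathrm{Aut}(\mathbb{A}^n_{\mathbb{C}}): f(\Delta)=\Delta\}$ is a maximal subgroup of $\mathrm{Aut}(\mathbb{A}^n_{\mathbb{C}})$, and it is closed in $\mathrm{Aut}(\mathbb{A}^n_{\mathbb{C}})$.
   Context: $\mathrm{Aut}(\mathbb{A}^n_{\mathbb{C}})$ is the group of polynomial automorphisms of $\mathbb{A}^n_{\mathbb{C}}$, an ind-group for the filtration by degree; a subset is closed iff its intersection with the variety of automorphisms of degree $\le d$ is Zariski closed for every $d$. *)

theory Defs
  imports Complex_Main "HOL-Library.Poly_Mapping" "HOL-Algebra.Group"
begin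

text \<open>Multivariate polynomials over C in variables of type 'v: finitely supported maps
  from monomials (exponent vectors 'v =>0 nat) to coefficients.\<close>
type_synonym 'v cpoly = "('v \<Rightarrow>\<^sub>0 nat) \<Rightarrow>\<^sub>0 complex"

definition mon_deg :: "('v \<Rightarrow>\<^sub>0 nat) \<Rightarrow> nat" where
  "mon_deg m = (\<Sum>v\<in>Poly_Mapping.keys m. Poly_Mapping.lookup m v)"

definition tdeg :: "'v cpoly \<Rightarrow> nat" where
  "tdeg p = Max (insert 0 (mon_deg ` Poly_Mapping.keys p))"

definition mpeval :: "'v cpoly \<Rightarrow> ('v \<Rightarrow> complex) \<Rightarrow> complex" where
  "mpeval p x = (\<Sum>m\<in>Poly_Mapping.keys p.
      Poly_Mapping.lookup p m * (\<Prod>v\<in>Poly_Mapping.keys m. x v ^ Poly_Mapping.lookup m v))"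

text \<open>Points of A^n are functions 'n => complex ('n a finite index type with n = CARD('n)).
  A polynomial map is given by n component polynomials.\<close>
definition eval_map :: "('n \<Rightarrow> 'n cpoly) \<Rightarrow> ('n \<Rightarrow> complex) \<Rightarrow> ('n \<Rightarrow> complex)" where
  "eval_map F x = (\<lambda>i. mpeval (F i) x)"

definition is_poly_map :: "(('n \<Rightarrow> complex) \<Rightarrow> ('n \<Rightarrow> complex)) \<Rightarrow> bool" where
  "is_poly_map f \<longleftrightarrow> (\<exists>F. f = eval_map F)"

definition Aut :: "(('n::finite \<Rightarrow> complex) \<Rightarrow> ('n \<Rightarrow> complex)) set" where
  "Aut = {f. bij f \<and> is_poly_map f \<and> is_poly_map (inv_into UNIV f)}"

definition AutG :: "(('n::finite \<Rightarrow> complex) \<Rightarrow> ('n \<Rightarrow> complex)) monoid" where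
  "AutG = \<lparr>carrier = Aut, monoid.mult = (\<circ>), monoid.one = id\<rparr>"

definition Aut_le :: "nat \<Rightarrow> (('n::finite \<Rightarrow> complex) \<Rightarrow> ('n \<Rightarrow> complex)) set" where
  "Aut_le d = {f \<in> Aut. \<exists>F. f = eval_map F \<and> (\<forall>i. tdeg (F i) \<le> d)}"

text \<open>Ind-topology: S is closed iff for each d, S \<inter> Aut_le d is the trace on Aut_le d of a
  Zariski closed subset of the affine space of coefficient tuples
  (coordinates indexed by (i, m): coefficient of monomial m in component i).\<close>
definition ind_closed :: "(('n::finite \<Rightarrow> complex) \<Rightarrow> ('n \<Rightarrow> complex)) set \<Rightarrow> bool" where
  "ind_closed S \<longleftrightarrow> (\<forall>d. \<exists>Q :: ('n \<times> ('n \<Rightarrow>\<^sub>0 nat)) cpoly set.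
     S \<inter> Aut_le d = {f \<in> Aut_le d. \<exists>F. f = eval_map F \<and> (\<forall>i. tdeg (F i) \<le> d) \<and>
        (\<forall>q\<in>Q. mpeval q (\<lambda>(i, m). Poly_Mapping.lookup (F i) m) = 0)})"

definition Stab :: "('n::finite \<Rightarrow> complex) set \<Rightarrow> (('n \<Rightarrow> complex) \<Rightarrow> ('n \<Rightarrow> complex)) set" where
  "Stab \<Delta> = {f \<in> Aut. f ` \<Delta> = \<Delta>}"

definition maximal_subgroup :: "'a set \<Rightarrow> ('a, 'b) monoid_scheme \<Rightarrow> bool" where
  "maximal_subgroup H G \<longleftrightarrow> subgroup H G \<and> H \<noteq> carrier G \<and>
     (\<forall>K. subgroup K G \<and> H \<subseteq> K \<longrightarrow> K = H \<or> K = carrier G)"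

end

theory Submission
  imports Defs
begin

text \<open>For \<open>n \<ge> 2\<close>, shears (adding to one coordinate a polynomial in the others) and
  transvections move any finite set of points, one point at a time and keeping the earlier ones
  fixed, onto a coordinate axis. Hence \<open>Aut\<close> acts infinitely transitively on \<open>\<complex>\<^sup>n\<close>, and
  \<open>Stab \<Delta>\<close> acts transitively on the finite sets \<open>\<Gamma>\<close> with prescribed \<open>card \<Gamma>\<close> and
  \<open>card (\<Gamma> \<inter> \<Delta>)\<close>. If a subgroup \<open>K \<supseteq> Stab \<Delta>\<close> moves \<open>\<Delta>\<close>, the family of images \<open>h ` \<Delta>\<close>,
  \<open>h \<in> K\<close>, contains a set sharing all but one point with \<open>\<Delta>\<close>; using it as a template, the
  family is closed under exchanging one point, hence contains every set of cardinality
  \<open>card \<Delta>\<close>, and \<open>K = Aut\<close>.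
  Closedness: \<open>f ` \<Delta> \<subseteq> \<Delta>\<close> iff for every \<open>p \<in> \<Delta>\<close> and every choice of coordinates \<open>\<sigma>\<close> the
  product of the \<open>f p (\<sigma> r) - r (\<sigma> r)\<close> over \<open>r \<in> \<Delta>\<close> vanishes, and these are polynomial
  equations in the coefficients of \<open>f\<close>.\<close>

type_synonym 'n point = "'n \<Rightarrow> complex"

abbreviation finv :: "('a \<Rightarrow> 'b) \<Rightarrow> 'b \<Rightarrow> 'a" where
  "finv f \<equiv> inv_into UNIV f"

subsection \<open>Polynomial functions\<close>

definition mono_val :: "('v \<Rightarrow>\<^sub>0 nat) \<Rightarrow> ('v \<Rightarrow> complex) \<Rightarrow> complex" where
  "mono_val m x = (\<Prod>v\<in>Poly_Mapping.keys m. x v ^ Poly_Mapping.lookup m v)"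

lemma mono_val_superset:
  assumes "finite S" "Poly_Mapping.keys m \<subseteq> S"
  shows "mono_val m x = (\<Prod>v\<in>S. x v ^ Poly_Mapping.lookup m v)"
  unfolding mono_val_def
  by (rule prod.mono_neutral_left) (use assms in \<open>auto simp: in_keys_iff\<close>)

lemma mono_val_add: "mono_val (m + k) x = mono_val m x * mono_val k x"
proof -
  let ?S = "Poly_Mapping.keys m \<union> Poly_Mapping.keys k"
  have "mono_val (m + k) x = (\<Prod>v\<in>?S. x v ^ Poly_Mapping.lookup (m + k) v)"
    by (rule mono_val_superset) (use keys_add[of m k] in auto)
  also have "\<dots> = (\<Prod>v\<in>?S. x v ^ Poly_Mapping.lookup m v) * (\<Prod>v\<in>?S. x v ^ Poly_Mapping.lookup k v)"
    by (simp add: lookup_add power_add prod.distrib)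
  also have "\<dots> = mono_val m x * mono_val k x"
    by (simp add: mono_val_superset[symmetric])
  finally show ?thesis .
qed

lemma mpeval_eq_sum_mono_val:
  "mpeval p x = (\<Sum>m\<in>Poly_Mapping.keys p. Poly_Mapping.lookup p m * mono_val m x)"
  by (simp add: mpeval_def mono_val_def)

definition mono_comb :: "(('v \<Rightarrow> complex) \<Rightarrow> complex) \<Rightarrow> bool" where
  "mono_comb g \<longleftrightarrow> (\<exists>S c. finite S \<and> g = (\<lambda>x. \<Sum>m\<in>S. c m * mono_val m x))"

lemma mono_comb_imp_mpeval:
  assumes "mono_comb g"
  shows "\<exists>p. g = mpeval p"
proof -
  obtain S c where S: "finite S" and g: "g = (\<lambda>x. \<Sum>m\<in>S. c m * mono_val m x)"
    using assms unfolding mono_comb_def by blast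
  define p where "p = Abs_poly_mapping (\<lambda>m. if m \<in> S then c m else 0)"
  have "finite {m. (if m \<in> S then c m else 0) \<noteq> 0}"
    by (rule finite_subset[OF _ S]) auto
  then have lookup_p: "Poly_Mapping.lookup p = (\<lambda>m. if m \<in> S then c m else 0)"
    unfolding p_def by (rule lookup_Abs_poly_mapping)
  then have keys_p: "Poly_Mapping.keys p \<subseteq> S"
    by (auto simp: in_keys_iff split: if_splits)
  have "mpeval p x = (\<Sum>m\<in>S. c m * mono_val m x)" for x
    unfolding mpeval_eq_sum_mono_val
    by (rule sum.mono_neutral_cong_left[OF S keys_p]) (use keys_p in \<open>auto simp: lookup_p in_keys_iff\<close>)
  then show ?thesis
    unfolding g by (intro exI[of _ p]) (simp add: fun_eq_iff)
qed

lemma mono_comb_const: "mono_comb (\<lambda>x. a)"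
  unfolding mono_comb_def by (rule exI[of _ "{0}"], rule exI[of _ "\<lambda>_. a"]) (simp add: mono_val_def)

lemma mono_comb_var: "mono_comb (\<lambda>x. x v)"
  unfolding mono_comb_def
  by (rule exI[of _ "{Poly_Mapping.single v 1}"], rule exI[of _ "\<lambda>_. 1"]) (simp add: mono_val_def)

lemma mono_comb_add:
  assumes "mono_comb f" "mono_comb g"
  shows "mono_comb (\<lambda>x. f x + g x)"
proof -
  obtain S c where S: "finite S" and f: "f = (\<lambda>x. \<Sum>m\<in>S. c m * mono_val m x)"
    using assms(1) unfolding mono_comb_def by blast
  obtain T d where T: "finite T" and g: "g = (\<lambda>x. \<Sum>m\<in>T. d m * mono_val m x)"
    using assms(2) unfolding mono_comb_def by blast
  define e where "e m = (if m \<in> S then c m else 0) + (if m \<in> T then d m else 0)" for m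
  have "f x + g x = (\<Sum>m\<in>S \<union> T. e m * mono_val m x)" for x
  proof -
    have "f x = (\<Sum>m\<in>S \<union> T. (if m \<in> S then c m else 0) * mono_val m x)"
      unfolding f by (rule sum.mono_neutral_cong_left) (use S T in auto)
    moreover have "g x = (\<Sum>m\<in>S \<union> T. (if m \<in> T then d m else 0) * mono_val m x)"
      unfolding g by (rule sum.mono_neutral_cong_left) (use S T in auto)
    ultimately show ?thesis
      by (simp add: e_def sum.distrib[symmetric] distrib_right)
  qed
  then show ?thesis
    unfolding mono_comb_def using S T by blast
qed

lemma mono_comb_mult:
  assumes "mono_comb f" "mono_comb g"
  shows "mono_comb (\<lambda>x. f x * g x)"
proof -
  obtain S c where S: "finite S" and f: "f = (\<lambda>x. \<Sum>m\<in>S. c m * mono_val m x)"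
    using assms(1) unfolding mono_comb_def by blast
  obtain T d where T: "finite T" and g: "g = (\<lambda>x. \<Sum>m\<in>T. d m * mono_val m x)"
    using assms(2) unfolding mono_comb_def by blast
  define h where "h = (\<lambda>(a :: 'a \<Rightarrow>\<^sub>0 nat, b). a + b)"
  define e where "e u = (\<Sum>q\<in>{q\<in>S \<times> T. h q = u}. c (fst q) * d (snd q))" for u
  have fin: "finite (S \<times> T)"
    using S T by simp
  have "f x * g x = (\<Sum>u\<in>h ` (S \<times> T). e u * mono_val u x)" for x
  proof -
    have "f x * g x = (\<Sum>q\<in>S \<times> T. c (fst q) * d (snd q) * mono_val (h q) x)"
      unfolding f g sum_product sum.cartesian_product
      by (rule sum.cong) (auto simp: h_def mono_val_add)
    also have "\<dots> = (\<Sum>u\<in>h ` (S \<times> T). \<Sum>q\<in>{q\<in>S \<times> T. h q = u}. c (fst q) * d (snd q) * mono_val (h q) x)"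
      by (rule sum.image_gen[OF fin])
    also have "\<dots> = (\<Sum>u\<in>h ` (S \<times> T). e u * mono_val u x)"
      unfolding e_def sum_distrib_right by (intro sum.cong refl) auto
    finally show ?thesis .
  qed
  then show ?thesis
    unfolding mono_comb_def using fin by blast
qed

inductive poly_fun :: "(('v \<Rightarrow> complex) \<Rightarrow> complex) \<Rightarrow> bool" where
  poly_fun_const: "poly_fun (\<lambda>x. a)"
| poly_fun_var: "poly_fun (\<lambda>x. x v)"
| poly_fun_add: "poly_fun f \<Longrightarrow> poly_fun g \<Longrightarrow> poly_fun (\<lambda>x. f x + g x)"
| poly_fun_mult: "poly_fun f \<Longrightarrow> poly_fun g \<Longrightarrow> poly_fun (\<lambda>x. f x * g x)"

lemma poly_fun_sum:
  "finite S \<Longrightarrow> (\<And>s. s \<in> S \<Longrightarrow> poly_fun (f s)) \<Longrightarrow> poly_fun (\<lambda>x. \<Sum>s\<in>S. f s x)"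
  by (induction S rule: finite_induct) (auto intro: poly_fun.intros)

lemma poly_fun_prod:
  "finite S \<Longrightarrow> (\<And>s. s \<in> S \<Longrightarrow> poly_fun (f s)) \<Longrightarrow> poly_fun (\<lambda>x. \<Prod>s\<in>S. f s x)"
  by (induction S rule: finite_induct) (auto intro: poly_fun.intros)

lemma poly_fun_power: "poly_fun f \<Longrightarrow> poly_fun (\<lambda>x. f x ^ n)"
  by (induction n) (auto intro: poly_fun.intros)

lemma poly_fun_diff:
  assumes "poly_fun f" "poly_fun g"
  shows "poly_fun (\<lambda>x. f x - g x)"
  using poly_fun_add[OF assms(1) poly_fun_mult[OF poly_fun_const[of "-1"] assms(2)]] by simp

lemma poly_fun_mpeval: "poly_fun (mpeval p)"
  unfolding mpeval_def[abs_def]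
  by (intro poly_fun_sum poly_fun_mult poly_fun_prod poly_fun_power poly_fun_const poly_fun_var) simp_all

lemma poly_fun_iff_mpeval: "poly_fun g \<longleftrightarrow> (\<exists>p. g = mpeval p)"
proof
  assume "poly_fun g"
  then have "mono_comb g"
    by induction (auto intro: mono_comb_const mono_comb_var mono_comb_add mono_comb_mult)
  then show "\<exists>p. g = mpeval p"
    by (rule mono_comb_imp_mpeval)
qed (auto simp: poly_fun_mpeval)

lemma poly_fun_subst:
  "poly_fun g \<Longrightarrow> (\<And>i. poly_fun (h i)) \<Longrightarrow> poly_fun (\<lambda>x. g (\<lambda>i. h i x))"
  by (induction rule: poly_fun.induct) (auto intro: poly_fun.intros)

subsection \<open>The group of polynomial automorphisms\<close>

lemma is_poly_map_iff: "is_poly_map f \<longleftrightarrow> (\<forall>i. poly_fun (\<lambda>x. f x i))"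
proof
  assume "is_poly_map f"
  then obtain F where "f = eval_map F"
    unfolding is_poly_map_def by blast
  then show "\<forall>i. poly_fun (\<lambda>x. f x i)"
    by (simp add: eval_map_def poly_fun_mpeval)
next
  assume "\<forall>i. poly_fun (\<lambda>x. f x i)"
  then obtain F where "\<And>i. (\<lambda>x. f x i) = mpeval (F i)"
    unfolding poly_fun_iff_mpeval by metis
  then have "f = eval_map F"
    by (auto simp: eval_map_def fun_eq_iff dest: fun_cong)
  then show "is_poly_map f"
    unfolding is_poly_map_def by blast
qed

lemma is_poly_map_comp:
  assumes "is_poly_map f" "is_poly_map g"
  shows "is_poly_map (f \<circ> g)"
  unfolding is_poly_map_iff
proof
  fix i
  have "poly_fun (\<lambda>x. (\<lambda>y. f y i) (\<lambda>j. g x j))"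
    using assms poly_fun_subst[of "\<lambda>y. f y i" "\<lambda>j x. g x j"] by (simp add: is_poly_map_iff)
  then show "poly_fun (\<lambda>x. (f \<circ> g) x i)"
    by simp
qed

lemma is_poly_map_id: "is_poly_map id"
  unfolding is_poly_map_iff by (simp add: poly_fun_var)

lemma AutI:
  assumes "is_poly_map f" "is_poly_map g" "f \<circ> g = id" "g \<circ> f = id"
  shows "f \<in> Aut"
  using assms o_bij[OF assms(4,3)] inv_unique_comp[OF assms(3,4)] by (simp add: Aut_def)

lemma AutD:
  assumes "f \<in> Aut"
  shows "bij f" "is_poly_map f" "finv f \<in> Aut" "f \<circ> finv f = id" "finv f \<circ> f = id"
proof -
  show "bij f" "is_poly_map f"
    using assms by (auto simp: Aut_def)
  then show right: "f \<circ> finv f = id" and left: "finv f \<circ> f = id"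
    by (simp_all add: bij_is_surj bij_is_inj surj_iff[symmetric])
  show "finv f \<in> Aut"
    using assms by (intro AutI[OF _ _ left right]) (auto simp: Aut_def)
qed

lemma id_in_Aut: "id \<in> Aut"
  by (rule AutI[OF is_poly_map_id is_poly_map_id]) simp_all

lemma Aut_comp:
  assumes "f \<in> Aut" "g \<in> Aut"
  shows "f \<circ> g \<in> Aut"
proof (rule AutI)
  show "is_poly_map (f \<circ> g)" "is_poly_map (finv g \<circ> finv f)"
    by (intro is_poly_map_comp AutD(2,3) assms)+
  have inverse: "f \<circ> finv f = id" "finv f \<circ> f = id" "g \<circ> finv g = id" "finv g \<circ> g = id"
    using assms by (simp_all add: AutD)
  show "(f \<circ> g) \<circ> (finv g \<circ> finv f) = id" "(finv g \<circ> finv f) \<circ> (f \<circ> g) = id"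
    by (metis inverse comp_assoc comp_id)+
qed

lemma Aut_inj: "f \<in> Aut \<Longrightarrow> inj f"
  by (simp add: AutD bij_is_inj)

lemma Aut_card_image: "f \<in> Aut \<Longrightarrow> card (f ` A) = card A"
  by (meson Aut_inj card_image inj_on_subset subset_UNIV)

lemma Aut_inv_image_image: "f \<in> Aut \<Longrightarrow> finv f ` f ` A = A"
  by (simp add: Aut_inj image_inv_f_f)

lemma Aut_image_inv_image: "f \<in> Aut \<Longrightarrow> f ` finv f ` A = A"
  by (simp add: AutD bij_is_surj image_f_inv_f)

lemma group_AutG: "group (AutG :: ('n::finite point \<Rightarrow> 'n point) monoid)"
  unfolding AutG_def
  by (rule groupI) (auto simp: id_in_Aut Aut_comp comp_assoc intro!: bexI[of _ "finv _"] AutD)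

lemma inv_AutG: "f \<in> Aut \<Longrightarrow> inv\<^bsub>AutG :: ('n::finite point \<Rightarrow> 'n point) monoid\<^esub> f = finv f"
  by (rule group.inv_equality[OF group_AutG]) (auto simp: AutG_def AutD)

lemma subgroup_AutGD:
  assumes "subgroup K (AutG :: ('n::finite point \<Rightarrow> 'n point) monoid)"
  shows "K \<subseteq> Aut" "f \<in> K \<Longrightarrow> g \<in> K \<Longrightarrow> f \<circ> g \<in> K" "id \<in> K"
  using subgroup.subset[OF assms] subgroup.m_closed[OF assms] subgroup.one_closed[OF assms]
  by (simp_all add: AutG_def)

lemma subgroup_Stab: "subgroup (Stab \<Delta>) (AutG :: ('n::finite point \<Rightarrow> 'n point) monoid)"
proof
  show "Stab \<Delta> \<subseteq> carrier (AutG :: ('n point \<Rightarrow> 'n point) monoid)"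
    by (auto simp: Stab_def AutG_def)
  show "\<one>\<^bsub>AutG :: ('n point \<Rightarrow> 'n point) monoid\<^esub> \<in> Stab \<Delta>"
    by (simp add: Stab_def AutG_def id_in_Aut)
  show "f \<otimes>\<^bsub>AutG :: ('n point \<Rightarrow> 'n point) monoid\<^esub> g \<in> Stab \<Delta>" if "f \<in> Stab \<Delta>" "g \<in> Stab \<Delta>" for f g
  proof -
    have "(f \<circ> g) ` \<Delta> = \<Delta>"
      unfolding image_comp[symmetric] using that by (simp add: Stab_def)
    then show ?thesis
      using that by (simp add: Stab_def AutG_def Aut_comp)
  qed
  show "inv\<^bsub>AutG :: ('n point \<Rightarrow> 'n point) monoid\<^esub> f \<in> Stab \<Delta>" if "f \<in> Stab \<Delta>" for f
    using that Aut_inv_image_image[of f \<Delta>] by (auto simp: Stab_def inv_AutG AutD)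
qed

lemma mem_Stab_iff_image_subset:
  assumes "f \<in> Aut" "finite \<Delta>"
  shows "f \<in> Stab \<Delta> \<longleftrightarrow> f ` \<Delta> \<subseteq> \<Delta>"
  using assms card_subset_eq[OF assms(2), of "f ` \<Delta>"] by (auto simp: Stab_def Aut_card_image)

subsection \<open>Infinite transitivity\<close>

lemma poly_fun_separating:
  fixes F :: "('v \<Rightarrow> complex) set"
  assumes "finite F" "c \<notin> F"
  obtains g where "poly_fun g" "\<And>f. f \<in> F \<Longrightarrow> g f = 0" "g c = 1"
proof -
  have "\<exists>l. c l \<noteq> f l" if "f \<in> F" for f
    using that assms(2) by (metis ext)
  then obtain l where l: "\<And>f. f \<in> F \<Longrightarrow> c (l f) \<noteq> f (l f)"
    by metis
  define g where "g x = (\<Prod>f\<in>F. (x (l f) - f (l f)) / (c (l f) - f (l f)))" for x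
  have "poly_fun g"
    unfolding g_def[abs_def] divide_inverse
    by (intro poly_fun_prod[OF assms(1)] poly_fun_mult poly_fun_diff poly_fun_var poly_fun_const)
  moreover have "g f = 0" if "f \<in> F" for f
    unfolding g_def using that assms(1) by (intro prod_zero) auto
  moreover have "g c = 1"
    unfolding g_def using l by (intro prod.neutral) simp
  ultimately show ?thesis
    using that by blast
qed

text \<open>The increment \<open>h\<close> does not see coordinate \<open>l\<close>, so the shear is inverted by subtracting it.\<close>

definition shear :: "'n \<Rightarrow> ('n point \<Rightarrow> complex) \<Rightarrow> 'n point \<Rightarrow> 'n point" where
  "shear l h x = x(l := x l + h (x(l := 0)))"

lemma is_poly_map_shear:
  assumes "poly_fun h"
  shows "is_poly_map (shear l h)"
  unfolding is_poly_map_iff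
proof
  fix i
  have "poly_fun (\<lambda>x. (x(l := 0)) j)" for j
    by (cases "j = l") (simp_all add: poly_fun_const poly_fun_var)
  then have "poly_fun (\<lambda>x. h (\<lambda>j. (x(l := 0)) j))"
    by (rule poly_fun_subst[OF assms])
  then have "poly_fun (\<lambda>x. x l + h (x(l := 0)))"
    by (rule poly_fun_add[OF poly_fun_var])
  then show "poly_fun (\<lambda>x. shear l h x i)"
    by (cases "i = l") (simp_all add: shear_def poly_fun_var)
qed

lemma shear_in_Aut:
  assumes "poly_fun h"
  shows "shear l h \<in> Aut"
proof (rule AutI)
  have "poly_fun (\<lambda>x. 0 - h x)"
    using assms by (intro poly_fun_diff poly_fun_const)
  then show "is_poly_map (shear l (\<lambda>x. - h x))"
    by (simp add: is_poly_map_shear)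
  show "shear l h \<circ> shear l (\<lambda>x. - h x) = id" "shear l (\<lambda>x. - h x) \<circ> shear l h = id"
    by (simp_all add: shear_def fun_eq_iff)
qed (rule is_poly_map_shear[OF assms])

lemma shear_moves_point_fixing:
  assumes "finite F" "c(l := 0) \<notin> (\<lambda>f. f(l := 0)) ` F"
  obtains \<psi> where "\<psi> \<in> Aut" "\<And>f. f \<in> F \<Longrightarrow> \<psi> f = f" "\<psi> c = c(l := t)"
proof -
  obtain g where g: "poly_fun g" "\<And>f'. f' \<in> (\<lambda>f. f(l := 0)) ` F \<Longrightarrow> g f' = 0" "g (c(l := 0)) = 1"
    using poly_fun_separating[OF finite_imageI[OF assms(1)] assms(2)] by metis
  define \<psi> where "\<psi> = shear l (\<lambda>y. (t - c l) * g y)"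
  have "\<psi> \<in> Aut"
    unfolding \<psi>_def by (intro shear_in_Aut poly_fun_mult poly_fun_const g(1))
  moreover have "\<psi> f = f" if "f \<in> F" for f
    unfolding \<psi>_def shear_def g(2)[OF imageI[OF that]] by simp
  moreover have "\<psi> c = c(l := t)"
    unfolding \<psi>_def shear_def g(3) by simp
  ultimately show ?thesis
    using that by blast
qed

definition transvection :: "'n \<Rightarrow> 'n point \<Rightarrow> 'n point \<Rightarrow> 'n point" where
  "transvection j w x = (\<lambda>i. if i = j then x j else x i + x j * w i)"

lemma is_poly_map_transvection: "is_poly_map (transvection j w)"
  unfolding is_poly_map_iff
proof
  fix i
  show "poly_fun (\<lambda>x. transvection j w x i)"
    using poly_fun_add[OF poly_fun_var poly_fun_mult[OF poly_fun_var poly_fun_const]]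
    by (cases "i = j") (simp_all add: transvection_def poly_fun_var)
qed

lemma transvection_in_Aut: "transvection j w \<in> Aut"
  by (rule AutI[OF is_poly_map_transvection[of j w] is_poly_map_transvection[of j "- w"]])
    (simp_all add: transvection_def fun_eq_iff)

lemma Aut_moves_point_fixing_hyperplane:
  assumes "finite F" "\<And>f. f \<in> F \<Longrightarrow> f j = 0" "c \<notin> F" "e \<notin> F" "e j = 0"
  obtains \<psi> where "\<psi> \<in> Aut" "\<And>f. f \<in> F \<Longrightarrow> \<psi> f = f" "\<psi> c = e"
proof -
  have "(\<lambda>f. f(j := 0)) ` F = id ` F"
    using assms(2) by (intro image_cong) (simp_all add: fun_upd_idem)
  then have proj_F: "(\<lambda>f. f(j := 0)) ` F = F"
    by simp
  obtain \<psi>1 where \<psi>1: "\<psi>1 \<in> Aut" "\<And>f. f \<in> F \<Longrightarrow> \<psi>1 f = f" and c1: "\<psi>1 c j \<noteq> 0"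
  proof (cases "c j = 0")
    case True
    then have "c(j := 0) \<notin> (\<lambda>f. f(j := 0)) ` F"
      using proj_F assms(3) by (simp add: fun_upd_idem)
    then obtain \<psi> where "\<psi> \<in> Aut" "\<And>f. f \<in> F \<Longrightarrow> \<psi> f = f" "\<psi> c = c(j := 1)"
      using shear_moves_point_fixing[OF assms(1)] by metis
    then show ?thesis
      using that by simp
  next
    case False
    then show ?thesis
      using that[of id] id_in_Aut by simp
  qed
  define w where "w = (\<lambda>i. (e i - \<psi>1 c i) / \<psi>1 c j)"
  define e' where "e' = e(j := \<psi>1 c j)"
  have lifted: "transvection j w (\<psi>1 c) = e'"
    using c1 by (simp add: transvection_def w_def e'_def fun_eq_iff)
  have fixed: "transvection j w f = f" if "f \<in> F" for f
    using assms(2)[OF that] by (simp add: transvection_def fun_eq_iff)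
  have e'_proj: "e'(j := 0) = e"
    using assms(5) by (simp add: e'_def fun_upd_idem)
  then have "e'(j := 0) \<notin> (\<lambda>f. f(j := 0)) ` F"
    using proj_F assms(4) by simp
  then obtain \<psi>3 where \<psi>3: "\<psi>3 \<in> Aut" "\<And>f. f \<in> F \<Longrightarrow> \<psi>3 f = f" "\<psi>3 e' = e"
    using shear_moves_point_fixing[OF assms(1)] e'_proj by metis
  show ?thesis
  proof (rule that)
    show "\<psi>3 \<circ> transvection j w \<circ> \<psi>1 \<in> Aut"
      by (intro Aut_comp \<psi>1(1) \<psi>3(1) transvection_in_Aut)
    show "(\<psi>3 \<circ> transvection j w \<circ> \<psi>1) f = f" if "f \<in> F" for f
      using that \<psi>1(2) \<psi>3(2) fixed by simp
    show "(\<psi>3 \<circ> transvection j w \<circ> \<psi>1) c = e"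
      using lifted \<psi>3(3) by simp
  qed
qed

definition axis_point :: "'n \<Rightarrow> nat \<Rightarrow> 'n point" where
  "axis_point i k = (\<lambda>l. if l = i then of_nat k else 0)"

lemma axis_point_inj: "axis_point i k = axis_point i k' \<Longrightarrow> k = k'"
  unfolding axis_point_def by (drule fun_cong[of _ _ i]) simp

lemma Aut_moves_to_axis_points:
  fixes i j :: "'n::finite"
  assumes "i \<noteq> j"
  shows "inj_on a {..<m} \<Longrightarrow> \<exists>\<psi>\<in>Aut. \<forall>k<m. \<psi> (a k) = axis_point i k"
proof (induction m)
  case 0
  then show ?case
    using id_in_Aut by blast
next
  case (Suc m)
  then have "inj_on a {..<m}"
    by (simp add: inj_on_subset)
  then obtain \<psi> where \<psi>: "\<psi> \<in> Aut" "\<And>k. k < m \<Longrightarrow> \<psi> (a k) = axis_point i k"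
    using Suc.IH by blast
  define F where "F = axis_point i ` {..<m}"
  have new_point: "\<psi> (a m) \<notin> F"
  proof
    assume "\<psi> (a m) \<in> F"
    then obtain k where k: "k < m" "\<psi> (a m) = axis_point i k"
      by (auto simp: F_def)
    then have "\<psi> (a m) = \<psi> (a k)"
      using \<psi>(2) by simp
    then have "a m = a k"
      using Aut_inj[OF \<psi>(1)] by (simp add: inj_eq)
    then show False
      using Suc.prems k(1) by (simp add: inj_on_eq_iff)
  qed
  have new_axis_point: "axis_point i m \<notin> F"
    by (auto simp: F_def dest: axis_point_inj)
  have on_hyperplane: "f j = 0" if "f \<in> F" for f
    using that assms by (auto simp: F_def axis_point_def)
  have "finite F" "axis_point i m j = 0"
    using assms by (simp_all add: F_def axis_point_def)
  then obtain \<phi> where \<phi>: "\<phi> \<in> Aut" "\<And>f. f \<in> F \<Longrightarrow> \<phi> f = f" "\<phi> (\<psi> (a m)) = axis_point i m"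
    using Aut_moves_point_fixing_hyperplane[of F j "\<psi> (a m)" "axis_point i m"] on_hyperplane
      new_point new_axis_point by blast
  have "(\<phi> \<circ> \<psi>) (a k) = axis_point i k" if "k < Suc m" for k
    using that \<phi>(2,3) \<psi>(2) by (cases "k = m") (auto simp: F_def)
  then show ?case
    using Aut_comp[OF \<phi>(1) \<psi>(1)] by blast
qed

theorem Aut_extends_injection:
  fixes A :: "'n::finite point set"
  assumes "card (UNIV :: 'n set) \<ge> 2" "finite A" "inj_on \<sigma> A"
  obtains \<phi> where "\<phi> \<in> Aut" "\<And>x. x \<in> A \<Longrightarrow> \<phi> x = \<sigma> x"
proof -
  obtain i j :: 'n where ij: "i \<noteq> j"
    using assms(1) by (metis card_le_Suc0_iff_eq not_less_eq_eq numeral_2_eq_2 UNIV_I finite_UNIV)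
  obtain a where a: "bij_betw a {..<card A} A"
    using ex_bij_betw_nat_finite[OF assms(2)] by (auto simp: atLeast0LessThan)
  then have "inj_on (\<sigma> \<circ> a) {..<card A}"
    using assms(3) by (auto simp: bij_betw_def intro: comp_inj_on)
  then obtain \<psi>' where \<psi>': "\<psi>' \<in> Aut" "\<And>k. k < card A \<Longrightarrow> \<psi>' (\<sigma> (a k)) = axis_point i k"
    using Aut_moves_to_axis_points[OF ij] by (metis comp_apply)
  obtain \<psi> where \<psi>: "\<psi> \<in> Aut" "\<And>k. k < card A \<Longrightarrow> \<psi> (a k) = axis_point i k"
    using Aut_moves_to_axis_points[OF ij bij_betw_imp_inj_on[OF a]] by blast
  have "(finv \<psi>' \<circ> \<psi>) x = \<sigma> x" if x: "x \<in> A" for x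
  proof -
    obtain k where k: "k < card A" "x = a k"
      using a x by (auto simp: bij_betw_def)
    then have "\<psi> x = \<psi>' (\<sigma> x)"
      using \<psi>(2) \<psi>'(2) by simp
    then show ?thesis
      using Aut_inj[OF \<psi>'(1)] by (simp add: inv_f_f)
  qed
  then show ?thesis
    using that Aut_comp[OF AutD(3)[OF \<psi>'(1)] \<psi>(1)] by blast
qed

subsection \<open>Maximality\<close>

lemma infinite_points: "infinite (UNIV :: 'n point set)"
  using finite_fun_UNIVD2 infinite_UNIV_char_0 by blast

lemma ex_inj_on_preserving_sets:
  assumes "finite \<Delta>" "finite \<Gamma>" "finite \<Gamma>'"
    and "card \<Gamma> = card \<Gamma>'" "card (\<Gamma> \<inter> \<Delta>) = card (\<Gamma>' \<inter> \<Delta>)"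
  obtains \<sigma> where "inj_on \<sigma> (\<Delta> \<union> \<Gamma>)" "\<sigma> ` \<Delta> = \<Delta>" "\<sigma> ` \<Gamma> = \<Gamma>'"
proof -
  have card_Diff: "card (A - \<Delta>) = card A - card (A \<inter> \<Delta>)" "card (\<Delta> - A) = card \<Delta> - card (A \<inter> \<Delta>)"
    if "finite A" for A
    using that assms(1) card_Diff_subset_Int[of A \<Delta>] card_Diff_subset_Int[of \<Delta> A]
    by (simp_all add: Int_commute)
  obtain b1 where b1: "bij_betw b1 (\<Gamma> \<inter> \<Delta>) (\<Gamma>' \<inter> \<Delta>)"
    using finite_same_card_bij assms by blast
  obtain b2 where b2: "bij_betw b2 (\<Delta> - \<Gamma>) (\<Delta> - \<Gamma>')"
    using finite_same_card_bij[of "\<Delta> - \<Gamma>" "\<Delta> - \<Gamma>'"] assms card_Diff by auto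
  obtain b3 where b3: "bij_betw b3 (\<Gamma> - \<Delta>) (\<Gamma>' - \<Delta>)"
    using finite_same_card_bij[of "\<Gamma> - \<Delta>" "\<Gamma>' - \<Delta>"] assms card_Diff by auto
  define \<sigma> where "\<sigma> x = (if x \<in> \<Gamma> \<inter> \<Delta> then b1 x else if x \<in> \<Delta> then b2 x else b3 x)" for x
  have "bij_betw \<sigma> (\<Gamma> \<inter> \<Delta>) (\<Gamma>' \<inter> \<Delta>)"
    using b1 by (subst bij_betw_cong[where g = b1]) (simp_all add: \<sigma>_def)
  moreover have "bij_betw \<sigma> (\<Delta> - \<Gamma>) (\<Delta> - \<Gamma>')"
    using b2 by (subst bij_betw_cong[where g = b2]) (simp_all add: \<sigma>_def)
  moreover have "bij_betw \<sigma> (\<Gamma> - \<Delta>) (\<Gamma>' - \<Delta>)"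
    using b3 by (subst bij_betw_cong[where g = b3]) (simp_all add: \<sigma>_def)
  ultimately
  have inter: "bij_betw \<sigma> (\<Gamma> \<inter> \<Delta>) (\<Gamma>' \<inter> \<Delta>)"
    and on_\<Delta>: "bij_betw \<sigma> ((\<Gamma> \<inter> \<Delta>) \<union> (\<Delta> - \<Gamma>)) ((\<Gamma>' \<inter> \<Delta>) \<union> (\<Delta> - \<Gamma>'))"
    and on_all: "bij_betw \<sigma> (((\<Gamma> \<inter> \<Delta>) \<union> (\<Delta> - \<Gamma>)) \<union> (\<Gamma> - \<Delta>)) (((\<Gamma>' \<inter> \<Delta>) \<union> (\<Delta> - \<Gamma>')) \<union> (\<Gamma>' - \<Delta>))"
    by (blast intro: bij_betw_combine)+
  have "\<Delta> = (\<Gamma> \<inter> \<Delta>) \<union> (\<Delta> - \<Gamma>)" "\<Delta> = (\<Gamma>' \<inter> \<Delta>) \<union> (\<Delta> - \<Gamma>')"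
    "\<Delta> \<union> \<Gamma> = ((\<Gamma> \<inter> \<Delta>) \<union> (\<Delta> - \<Gamma>)) \<union> (\<Gamma> - \<Delta>)"
    "\<Gamma> = (\<Gamma> \<inter> \<Delta>) \<union> (\<Gamma> - \<Delta>)" "\<Gamma>' = (\<Gamma>' \<inter> \<Delta>) \<union> (\<Gamma>' - \<Delta>)"
    by blast+
  then show ?thesis
    using that on_\<Delta> on_all inter \<open>bij_betw \<sigma> (\<Gamma> - \<Delta>) (\<Gamma>' - \<Delta>)\<close>
    by (metis bij_betw_def image_Un)
qed

lemma Stab_moves_set:
  fixes \<Delta> :: "'n::finite point set"
  assumes "card (UNIV :: 'n set) \<ge> 2" "finite \<Delta>" "finite \<Gamma>" "finite \<Gamma>'"
    and "card \<Gamma> = card \<Gamma>'" "card (\<Gamma> \<inter> \<Delta>) = card (\<Gamma>' \<inter> \<Delta>)"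
  obtains \<phi> where "\<phi> \<in> Stab \<Delta>" "\<phi> ` \<Gamma> = \<Gamma>'"
proof -
  obtain \<sigma> where \<sigma>: "inj_on \<sigma> (\<Delta> \<union> \<Gamma>)" "\<sigma> ` \<Delta> = \<Delta>" "\<sigma> ` \<Gamma> = \<Gamma>'"
    using ex_inj_on_preserving_sets[OF assms(2-6)] by blast
  obtain \<phi> where \<phi>: "\<phi> \<in> Aut" "\<And>x. x \<in> \<Delta> \<union> \<Gamma> \<Longrightarrow> \<phi> x = \<sigma> x"
    using Aut_extends_injection[OF assms(1) _ \<sigma>(1)] assms(2,3) by blast
  then have "\<phi> ` \<Delta> = \<sigma> ` \<Delta>" "\<phi> ` \<Gamma> = \<sigma> ` \<Gamma>"
    by (simp_all cong: image_cong)
  then show ?thesis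
    using that \<phi>(1) \<sigma>(2,3) by (simp add: Stab_def)
qed

locale Stab_overgroup =
  fixes \<Delta> :: "'n::finite point set" and K :: "('n point \<Rightarrow> 'n point) set"
  assumes card_UNIV_ge_2: "card (UNIV :: 'n set) \<ge> 2"
    and finite_\<Delta>: "finite \<Delta>"
    and subgroup_K: "subgroup K (AutG :: ('n point \<Rightarrow> 'n point) monoid)"
    and Stab_subset: "Stab \<Delta> \<subseteq> K"
begin

definition orbit_sets :: "'n point set set" where
  "orbit_sets = (\<lambda>h. h ` \<Delta>) ` K"

lemma K_subset_Aut: "K \<subseteq> Aut"
  using subgroup_AutGD(1)[OF subgroup_K] .

lemma orbit_sets_card:
  assumes "\<Gamma> \<in> orbit_sets"
  shows "finite \<Gamma>" "card \<Gamma> = card \<Delta>"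
  using assms finite_\<Delta> K_subset_Aut by (auto simp: orbit_sets_def Aut_card_image)

text \<open>Pulling \<open>\<Gamma>'\<close> back along \<open>h \<in> K\<close> with \<open>h ` \<Delta> = \<Gamma>\<close> gives a set in the same position
  relative to \<open>\<Delta>\<close> as \<open>\<Sigma>\<close>, so some element of \<open>Stab \<Delta>\<close> moves \<open>\<Sigma>\<close> onto it.\<close>

lemma orbit_sets_transfer:
  assumes "\<Gamma> \<in> orbit_sets" "\<Sigma> \<in> orbit_sets" "finite \<Gamma>'" "card \<Gamma>' = card \<Delta>"
    and "card (\<Sigma> \<inter> \<Delta>) = card (\<Gamma>' \<inter> \<Gamma>)"
  shows "\<Gamma>' \<in> orbit_sets"
proof -
  obtain h where h: "h \<in> K" "\<Gamma> = h ` \<Delta>"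
    using assms(1) by (auto simp: orbit_sets_def)
  obtain s where s: "s \<in> K" "\<Sigma> = s ` \<Delta>"
    using assms(2) by (auto simp: orbit_sets_def)
  have hA: "h \<in> Aut"
    using h(1) K_subset_Aut by blast
  define \<Gamma>'' where "\<Gamma>'' = finv h ` \<Gamma>'"
  have inj: "inj (finv h)"
    using hA by (simp add: AutD Aut_inj)
  have "\<Gamma>'' \<inter> \<Delta> = finv h ` (\<Gamma>' \<inter> \<Gamma>)"
    using Aut_inv_image_image[OF hA, of \<Delta>] h(2) by (simp add: \<Gamma>''_def image_Int[OF inj])
  then have "card (\<Sigma> \<inter> \<Delta>) = card (\<Gamma>'' \<inter> \<Delta>)"
    using assms(5) inj by (simp add: card_image inj_on_subset)
  moreover have "card \<Sigma> = card \<Gamma>''"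
    using orbit_sets_card[OF assms(2)] assms(4) hA by (simp add: \<Gamma>''_def Aut_card_image AutD)
  ultimately obtain \<phi> where \<phi>: "\<phi> \<in> Stab \<Delta>" "\<phi> ` \<Sigma> = \<Gamma>''"
    using Stab_moves_set[OF card_UNIV_ge_2 finite_\<Delta>] orbit_sets_card[OF assms(2)] assms(3)
    by (metis Int_commute \<Gamma>''_def finite_imageI)
  have "h \<circ> \<phi> \<circ> s \<in> K"
    using h(1) s(1) \<phi>(1) Stab_subset subgroup_AutGD(2)[OF subgroup_K] by blast
  moreover have "(h \<circ> \<phi> \<circ> s) ` \<Delta> = \<Gamma>'"
    unfolding image_comp[symmetric] using \<phi>(2) s(2) Aut_image_inv_image[OF hA] by (simp add: \<Gamma>''_def)
  ultimately show ?thesis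
    unfolding orbit_sets_def by blast
qed

lemma card_eq_imp_orbit_sets:
  assumes \<Sigma>: "\<Sigma> \<in> orbit_sets" "card (\<Sigma> \<inter> \<Delta>) + 1 = card \<Delta>"
  shows "finite \<Gamma> \<Longrightarrow> card \<Gamma> = card \<Delta> \<Longrightarrow> \<Gamma> \<in> orbit_sets"
proof (induction "card (\<Gamma> - \<Delta>)" arbitrary: \<Gamma>)
  case 0
  then have "\<Gamma> = \<Delta>"
    using card_subset_eq[OF finite_\<Delta>] by (simp add: Diff_eq_empty_iff)
  moreover have "id ` \<Delta> \<in> orbit_sets"
    unfolding orbit_sets_def using subgroup_AutGD(3)[OF subgroup_K] by (rule imageI)
  ultimately show ?case
    by simp
next
  case (Suc t)
  then obtain x where x: "x \<in> \<Gamma>" "x \<notin> \<Delta>"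
    by (metis Diff_iff card_0_eq ex_in_conv finite_Diff nat.distinct(1))
  obtain y where y: "y \<in> \<Delta>" "y \<notin> \<Gamma>"
    using card_subset_eq[OF Suc.prems(1), of \<Delta>] Suc.prems(2) x by auto
  then have "card \<Delta> > 0"
    using finite_\<Delta> card_gt_0_iff by blast
  define \<Gamma>' where "\<Gamma>' = insert y (\<Gamma> - {x})"
  have "\<Gamma>' - \<Delta> = (\<Gamma> - \<Delta>) - {x}"
    using y by (auto simp: \<Gamma>'_def)
  then have "\<Gamma>' \<in> orbit_sets"
    using Suc x y \<open>card \<Delta> > 0\<close> by (intro Suc.hyps) (simp_all add: \<Gamma>'_def card_Diff_singleton)
  moreover have "\<Gamma> \<inter> \<Gamma>' = \<Gamma> - {x}"
    using x y by (auto simp: \<Gamma>'_def)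
  then have "card (\<Sigma> \<inter> \<Delta>) = card (\<Gamma> \<inter> \<Gamma>')"
    using \<Sigma>(2) x Suc.prems by (simp add: card_Diff_singleton)
  ultimately show ?case
    using orbit_sets_transfer \<Sigma>(1) Suc.prems by (metis Int_commute)
qed

lemma orbit_sets_neighbour:
  assumes "g \<in> K" "g \<notin> Stab \<Delta>"
  obtains \<Sigma> where "\<Sigma> \<in> orbit_sets" "card (\<Sigma> \<inter> \<Delta>) + 1 = card \<Delta>"
proof -
  have \<Gamma>: "g ` \<Delta> \<in> orbit_sets"
    using assms(1) by (simp add: orbit_sets_def)
  have "\<not> \<Delta> \<subseteq> g ` \<Delta>"
  proof
    assume "\<Delta> \<subseteq> g ` \<Delta>"
    then have "\<Delta> = g ` \<Delta>"
      using card_subset_eq orbit_sets_card[OF \<Gamma>] by metis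
    then show False
      using assms K_subset_Aut by (auto simp: Stab_def)
  qed
  then obtain d where d: "d \<in> \<Delta>" "d \<notin> g ` \<Delta>"
    by (meson subsetI)
  then have "card \<Delta> > 0"
    using finite_\<Delta> card_gt_0_iff by blast
  have "finite (\<Delta> \<union> g ` \<Delta>)"
    using finite_\<Delta> by simp
  then obtain z where z: "z \<notin> \<Delta> \<union> g ` \<Delta>"
    using ex_new_if_finite[OF infinite_points] by blast
  define \<Sigma> where "\<Sigma> = insert z (\<Delta> - {d})"
  have "\<Sigma> \<inter> g ` \<Delta> = g ` \<Delta> \<inter> \<Delta>"
    using z d by (auto simp: \<Sigma>_def)
  then have "\<Sigma> \<in> orbit_sets"
    using z d finite_\<Delta> \<open>card \<Delta> > 0\<close>
    by (intro orbit_sets_transfer[OF \<Gamma> \<Gamma>]) (simp_all add: \<Sigma>_def card_Diff_singleton)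
  moreover have "\<Sigma> \<inter> \<Delta> = \<Delta> - {d}"
    using z by (auto simp: \<Sigma>_def)
  then have "card (\<Sigma> \<inter> \<Delta>) + 1 = card \<Delta>"
    using d finite_\<Delta> \<open>card \<Delta> > 0\<close> by (simp add: card_Diff_singleton)
  ultimately show ?thesis
    using that by blast
qed

lemma K_eq_Aut:
  assumes "g \<in> K" "g \<notin> Stab \<Delta>"
  shows "K = Aut"
proof
  show "Aut \<subseteq> K"
  proof
    fix f :: "'n point \<Rightarrow> 'n point"
    assume f: "f \<in> Aut"
    obtain \<Sigma> where "\<Sigma> \<in> orbit_sets" "card (\<Sigma> \<inter> \<Delta>) + 1 = card \<Delta>"
      using orbit_sets_neighbour[OF assms] .
    then have "f ` \<Delta> \<in> orbit_sets"
      using card_eq_imp_orbit_sets finite_\<Delta> f by (simp add: Aut_card_image)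
    then obtain h where h: "h \<in> K" "f ` \<Delta> = h ` \<Delta>"
      by (auto simp: orbit_sets_def)
    have hA: "h \<in> Aut"
      using h(1) K_subset_Aut by blast
    have "(finv h \<circ> f) ` \<Delta> = \<Delta>"
      unfolding image_comp[symmetric] h(2) by (rule Aut_inv_image_image[OF hA])
    then have "finv h \<circ> f \<in> Stab \<Delta>"
      using f hA by (simp add: Stab_def Aut_comp AutD)
    then have "h \<circ> (finv h \<circ> f) \<in> K"
      using h(1) Stab_subset subgroup_AutGD(2)[OF subgroup_K] by blast
    then show "f \<in> K"
      by (simp add: comp_assoc[symmetric] AutD(4)[OF hA])
  qed
qed (rule K_subset_Aut)

end

lemma Stab_neq_Aut:
  fixes \<Delta> :: "'n::finite point set"
  assumes "card (UNIV :: 'n set) \<ge> 2" "finite \<Delta>" "\<Delta> \<noteq> {}"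
  shows "Stab \<Delta> \<noteq> Aut"
proof
  assume Stab_eq: "Stab \<Delta> = Aut"
  obtain p q where "p \<in> \<Delta>" "q \<notin> \<Delta>"
    using assms(3) ex_new_if_finite[OF infinite_points assms(2)] by blast
  moreover obtain \<phi> where "\<phi> \<in> Aut" "\<phi> p = q"
    using Aut_extends_injection[OF assms(1), of "{p}" "\<lambda>_. q"] by auto
  ultimately show False
    using Stab_eq by (auto simp: Stab_def)
qed

theorem maximal_subgroup_Stab:
  fixes \<Delta> :: "'n::finite point set"
  assumes "card (UNIV :: 'n set) \<ge> 2" "finite \<Delta>" "\<Delta> \<noteq> {}"
  shows "maximal_subgroup (Stab \<Delta>) (AutG :: ('n point \<Rightarrow> 'n point) monoid)"
  unfolding maximal_subgroup_def
proof (intro conjI allI impI)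
  show "subgroup (Stab \<Delta>) (AutG :: ('n point \<Rightarrow> 'n point) monoid)"
    by (rule subgroup_Stab)
  show "Stab \<Delta> \<noteq> carrier (AutG :: ('n point \<Rightarrow> 'n point) monoid)"
    using Stab_neq_Aut[OF assms] by (simp add: AutG_def)
  fix K
  assume K: "subgroup K (AutG :: ('n point \<Rightarrow> 'n point) monoid) \<and> Stab \<Delta> \<subseteq> K"
  then interpret Stab_overgroup \<Delta> K
    using Stab_overgroup.intro[OF assms(1,2)] by blast
  show "K = Stab \<Delta> \<or> K = carrier (AutG :: ('n point \<Rightarrow> 'n point) monoid)"
    using K K_eq_Aut by (auto simp: AutG_def)
qed

subsection \<open>Closedness\<close>

definition monomials_le :: "nat \<Rightarrow> ('n \<Rightarrow>\<^sub>0 nat) set" where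
  "monomials_le d = {m. mon_deg m \<le> d}"

lemma lookup_le_mon_deg: "Poly_Mapping.lookup m v \<le> mon_deg m"
  unfolding mon_deg_def
  by (cases "v \<in> Poly_Mapping.keys m") (auto intro: member_le_sum simp: in_keys_iff)

lemma finite_monomials_le: "finite (monomials_le d :: ('n::finite \<Rightarrow>\<^sub>0 nat) set)"
proof -
  have "Poly_Mapping.lookup ` monomials_le d \<subseteq> {f :: 'n \<Rightarrow> nat. \<forall>v. v \<in> UNIV \<longrightarrow> f v \<in> {..d}}"
    using lookup_le_mon_deg order_trans by (fastforce simp: monomials_le_def)
  moreover have "finite {f :: 'n \<Rightarrow> nat. \<forall>v. v \<in> UNIV \<longrightarrow> f v \<in> {..d}}"
    using finite_set_of_finite_funs[of "UNIV :: 'n set" "{..d}" 0] by simp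
  ultimately have "finite (Poly_Mapping.lookup ` monomials_le d :: ('n \<Rightarrow> nat) set)"
    by (rule finite_subset)
  then show ?thesis
    by (rule finite_imageD) (simp add: inj_on_def)
qed

definition eval_coeffs :: "nat \<Rightarrow> 'n::finite point \<Rightarrow> 'n \<Rightarrow> ('n \<times> ('n \<Rightarrow>\<^sub>0 nat) \<Rightarrow> complex) \<Rightarrow> complex" where
  "eval_coeffs d p i y = (\<Sum>m\<in>monomials_le d. y (i, m) * mono_val m p)"

lemma eval_coeffs_eq_mpeval:
  assumes "tdeg (F i) \<le> d"
  shows "eval_coeffs d p i (\<lambda>(i, m). Poly_Mapping.lookup (F i) m) = mpeval (F i) p"
proof -
  have "mon_deg m \<le> tdeg (F i)" if "m \<in> Poly_Mapping.keys (F i)" for m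
    unfolding tdeg_def using that by (intro Max_ge) auto
  then have "Poly_Mapping.keys (F i) \<subseteq> monomials_le d"
    using assms by (force simp: monomials_le_def)
  then show ?thesis
    unfolding eval_coeffs_def mpeval_eq_sum_mono_val case_prod_conv
    by (intro sum.mono_neutral_right finite_monomials_le) (auto simp: in_keys_iff)
qed

lemma poly_fun_eval_coeffs: "poly_fun (eval_coeffs d p i)"
  unfolding eval_coeffs_def[abs_def]
  by (intro poly_fun_sum finite_monomials_le poly_fun_mult poly_fun_var poly_fun_const)

lemma mem_iff_prod_coord_diff_eq_0:
  fixes \<Delta> :: "('a \<Rightarrow> 'b::idom) set"
  assumes "finite \<Delta>"
  shows "x \<in> \<Delta> \<longleftrightarrow> (\<forall>\<sigma>. (\<Prod>r\<in>\<Delta>. x (\<sigma> r) - r (\<sigma> r)) = 0)"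
proof
  assume vanish: "\<forall>\<sigma>. (\<Prod>r\<in>\<Delta>. x (\<sigma> r) - r (\<sigma> r)) = 0"
  show "x \<in> \<Delta>"
  proof (rule ccontr)
    assume "x \<notin> \<Delta>"
    then obtain \<sigma> where "\<forall>r\<in>\<Delta>. x (\<sigma> r) \<noteq> r (\<sigma> r)"
      by (metis ext)
    then have "(\<Prod>r\<in>\<Delta>. x (\<sigma> r) - r (\<sigma> r)) \<noteq> 0"
      using assms by simp
    then show False
      using vanish by blast
  qed
qed (use assms in auto)

definition Stab_equations :: "nat \<Rightarrow> 'n::finite point set \<Rightarrow> ('n \<times> ('n \<Rightarrow>\<^sub>0 nat)) cpoly set" where
  "Stab_equations d \<Delta> = {q. \<exists>p\<in>\<Delta>. \<exists>\<sigma>. mpeval q = (\<lambda>y. \<Prod>r\<in>\<Delta>. eval_coeffs d p (\<sigma> r) y - r (\<sigma> r))}"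

lemma Stab_equations_vanish_iff:
  assumes "finite \<Delta>" "\<forall>i. tdeg (F i) \<le> d"
  shows "(\<forall>q\<in>Stab_equations d \<Delta>. mpeval q (\<lambda>(i, m). Poly_Mapping.lookup (F i) m) = 0)
    \<longleftrightarrow> eval_map F ` \<Delta> \<subseteq> \<Delta>"
proof -
  have ex_equation: "\<exists>q. mpeval q = (\<lambda>y. \<Prod>r\<in>\<Delta>. eval_coeffs d p (\<sigma> r) y - r (\<sigma> r))" for p \<sigma>
  proof -
    have "poly_fun (\<lambda>y. \<Prod>r\<in>\<Delta>. eval_coeffs d p (\<sigma> r) y - r (\<sigma> r))"
      by (intro poly_fun_prod[OF assms(1)] poly_fun_diff poly_fun_eval_coeffs poly_fun_const)
    then show ?thesis
      unfolding poly_fun_iff_mpeval by metis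
  qed
  let ?y = "\<lambda>(i, m). Poly_Mapping.lookup (F i) m"
  have equation_at_F: "mpeval q ?y = (\<Prod>r\<in>\<Delta>. eval_map F p (\<sigma> r) - r (\<sigma> r))"
    if "mpeval q = (\<lambda>y. \<Prod>r\<in>\<Delta>. eval_coeffs d p (\<sigma> r) y - r (\<sigma> r))" for q p \<sigma>
    using that assms(2) by (simp add: eval_coeffs_eq_mpeval eval_map_def)
  have "(\<forall>q\<in>Stab_equations d \<Delta>. mpeval q ?y = 0)
      \<longleftrightarrow> (\<forall>p\<in>\<Delta>. \<forall>\<sigma>. (\<Prod>r\<in>\<Delta>. eval_map F p (\<sigma> r) - r (\<sigma> r)) = 0)"
  proof (intro iffI ballI allI)
    fix p \<sigma>
    assume "\<forall>q\<in>Stab_equations d \<Delta>. mpeval q ?y = 0" "p \<in> \<Delta>"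
    then show "(\<Prod>r\<in>\<Delta>. eval_map F p (\<sigma> r) - r (\<sigma> r)) = 0"
      using ex_equation[of p \<sigma>] equation_at_F by (force simp: Stab_equations_def)
  next
    fix q
    assume "\<forall>p\<in>\<Delta>. \<forall>\<sigma>. (\<Prod>r\<in>\<Delta>. eval_map F p (\<sigma> r) - r (\<sigma> r)) = 0" "q \<in> Stab_equations d \<Delta>"
    then show "mpeval q ?y = 0"
      using equation_at_F by (force simp: Stab_equations_def)
  qed
  also have "\<dots> \<longleftrightarrow> eval_map F ` \<Delta> \<subseteq> \<Delta>"
    using mem_iff_prod_coord_diff_eq_0[OF assms(1)] by blast
  finally show ?thesis .
qed

theorem ind_closed_Stab:
  assumes "finite \<Delta>"
  shows "ind_closed (Stab \<Delta>)"
  unfolding ind_closed_def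
proof
  fix d
  let ?vanish = "\<lambda>F. \<forall>q\<in>Stab_equations d \<Delta>. mpeval q (\<lambda>(i, m). Poly_Mapping.lookup (F i) m) = 0"
  have "f \<in> Stab \<Delta> \<longleftrightarrow> (\<exists>F. f = eval_map F \<and> (\<forall>i. tdeg (F i) \<le> d) \<and> ?vanish F)"
    if f: "f \<in> Aut_le d" for f
  proof -
    obtain F where F: "f = eval_map F" "\<forall>i. tdeg (F i) \<le> d"
      using f by (auto simp: Aut_le_def)
    have "f \<in> Stab \<Delta> \<longleftrightarrow> f ` \<Delta> \<subseteq> \<Delta>"
      using f mem_Stab_iff_image_subset[OF _ assms] by (simp add: Aut_le_def)
    then show ?thesis
      using F Stab_equations_vanish_iff[OF assms] by metis
  qed
  then show "\<exists>Q. Stab \<Delta> \<inter> Aut_le d = {f \<in> Aut_le d. \<exists>F. f = eval_map F \<and> (\<forall>i. tdeg (F i) \<le> d) \<and>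
      (\<forall>q\<in>Q. mpeval q (\<lambda>(i, m). Poly_Mapping.lookup (F i) m) = 0)}"
    by blast
qed

theorem proposition3p26:
  fixes \<Delta> :: "('n::finite \<Rightarrow> complex) set"
  assumes "card (UNIV :: 'n set) \<ge> 2"
    and "finite \<Delta>"
    and "\<Delta> \<noteq> {}"
  shows "maximal_subgroup (Stab \<Delta>) (AutG :: (('n \<Rightarrow> complex) \<Rightarrow> ('n \<Rightarrow> complex)) monoid)
         \<and> ind_closed (Stab \<Delta>)"
  using maximal_subgroup_Stab[OF assms] ind_closed_Stab[OF assms(2)] by simp

end
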